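(* Let $D\geq 1$, $\mathcal{C}=\{-1,1\}^D$, and let $\mathfrak{A}\subseteq 2^{[D]}$ be a collection of subsets of $[D]$. Let $\mathcal{F}(\mathfrak{A})$ be the class of Boolean functions $f:\mathcal{C}\to\{-1,1\}$ whose Fourier coefficients vanish outside $\mathfrak{A}$, i.e. $\hat f(S)=0$ for all $S\subseteq[D]$ with $S\notin\mathfrak{A}$, where $\hat f(S)=\mathbb{E}_{X\sim\mathrm{Unif}(\mathcal{C})}[f(X)\chi_S(X)]$ and $\chi_S(x)=\prod_{i\in S}x_i$. Then \[ \dim_E(\mathcal{F}(\mathfrak{A}))\leq|\mathfrak{A}|. \] In particular, when $\mathfrak{A}$ consists of sets of size at most $k$, $|\mathfrak{A}|\leq\binom{D}{0}+\binom{D}{1}+\cdots+\binom{D}{k}\leq(eD/k)^k$.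
   Context: For a class $\mathcal{F}$ of functions $\mathcal{C}\to\{-1,1\}$, a point $x\in\mathcal{C}$ is independent of a sequence $(x_j)_{j=1}^m$ with respect to $\mathcal{F}$ if there exist $f_1,f_2\in\mathcal{F}$ with $f_1(x_j)=f_2(x_j)$ for all $j\in[m]$ but $f_1(x)\neq f_2(x)$. The eluder dimension $\dim_E(\mathcal{F})$ is the largest $K$ such that there exist $x_1,\dots,x_K\in\mathcal{C}$ with each $x_i$ independent of $(x_j)_{j=1}^{i-1}$ with respect to $\mathcal{F}$. *)

theory Defs
  imports "HOL-Analysis.Analysis" "HOL-Library.FuncSet" "HOL-Library.Extended_Nat"
begin

definition cube :: "nat \<Rightarrow> (nat \<Rightarrow> real) set" where
  "cube D = PiE {0..<D} (\<lambda>_. {-1, 1})"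

definition chi :: "nat set \<Rightarrow> (nat \<Rightarrow> real) \<Rightarrow> real" where
  "chi S x = (\<Prod>i\<in>S. x i)"

definition fourier_coeff :: "nat \<Rightarrow> ((nat \<Rightarrow> real) \<Rightarrow> real) \<Rightarrow> nat set \<Rightarrow> real" where
  "fourier_coeff D f S = (\<Sum>x\<in>cube D. f x * chi S x) / real (card (cube D))"

definition fourier_class :: "nat \<Rightarrow> nat set set \<Rightarrow> ((nat \<Rightarrow> real) \<Rightarrow> real) set" where
  "fourier_class D A = {f. f \<in> cube D \<rightarrow>\<^sub>E {-1, 1} \<and>
      (\<forall>S. S \<subseteq> {0..<D} \<and> S \<notin> A \<longrightarrow> fourier_coeff D f S = 0)}"

definition independent_of :: "('a \<Rightarrow> 'b) set \<Rightarrow> 'a \<Rightarrow> 'a list \<Rightarrow> bool" where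
  "independent_of F x ys \<longleftrightarrow>
     (\<exists>f1\<in>F. \<exists>f2\<in>F. (\<forall>y\<in>set ys. f1 y = f2 y) \<and> f1 x \<noteq> f2 x)"

definition eluder_dim :: "'a set \<Rightarrow> ('a \<Rightarrow> 'b) set \<Rightarrow> enat" where
  "eluder_dim C F = Sup {enat (length xs) | xs. set xs \<subseteq> C \<and>
       (\<forall>i<length xs. independent_of F (xs ! i) (take i xs))}"

end

theory Submission
  imports Defs "HOL-Library.Function_Algebras"
begin

text \<open>
  If every function of a class is, on the domain, a linear combination
  \<open>\<Sum>i\<in>I. c i * \<phi> i z\<close> of finitely many fixed features, it is a linear functional of
  the feature vector \<open>(\<phi> i z)\<^sub>i\<^sub>\<in>\<^sub>I\<close>. If \<open>x\<close> is independent of \<open>y\<^sub>1, \<dots>, y\<^sub>m\<close>, the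
  difference of the two witnessing functions is a linear functional vanishing on the feature
  vectors of the \<open>y\<^sub>j\<close> but not on that of \<open>x\<close>, so the feature vector of \<open>x\<close> lies outside
  their span. Hence an eluder sequence has linearly independent feature vectors in an
  \<open>|I|\<close>-dimensional space, and its length is at most \<open>|I|\<close>. By Fourier inversion,
  \<open>\<F>(\<AA>)\<close> is such a class with features \<open>\<chi>\<^sub>S\<close>, \<open>S \<in> \<AA>\<close>.
\<close>

interpretation real_fun: vector_space "\<lambda>(c::real) (v::'i \<Rightarrow> real) i. c * v i"
  by unfold_locales (auto simp: algebra_simps fun_eq_iff)

lemma independent_if_notin_span_prefixes:
  fixes vs :: "('i \<Rightarrow> real) list"
  assumes "\<forall>i<length vs. vs ! i \<notin> real_fun.span (set (take i vs))"
  shows "real_fun.independent (set vs) \<and> distinct vs"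
  using assms
proof (induction vs rule: rev_induct)
  case Nil
  then show ?case by (simp add: real_fun.independent_empty)
next
  case (snoc v vs)
  have "\<forall>i<length vs. vs ! i \<notin> real_fun.span (set (take i vs))"
  proof (intro allI impI)
    fix i assume "i < length vs"
    then show "vs ! i \<notin> real_fun.span (set (take i vs))"
      using snoc.prems[rule_format, of i] by (simp add: nth_append)
  qed
  then have IH: "real_fun.independent (set vs)" "distinct vs"
    using snoc.IH by auto
  have "v \<notin> real_fun.span (set vs)"
    using snoc.prems[rule_format, of "length vs"] by simp
  then show ?case
    using IH real_fun.independent_insertI real_fun.span_base by fastforce
qed

lemma sum_apply: "sum g A x = (\<Sum>a\<in>A. g a x)"
  by (induction A rule: infinite_finite_induct) auto

definition feature_vector :: "'i set \<Rightarrow> ('i \<Rightarrow> 'a \<Rightarrow> real) \<Rightarrow> 'a \<Rightarrow> 'i \<Rightarrow> real" where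
  "feature_vector I \<phi> z = (\<lambda>i. if i \<in> I then \<phi> i z else 0)"

lemma feature_vector_in_span_units:
  assumes "finite I"
  shows "feature_vector I \<phi> z \<in> real_fun.span ((\<lambda>i j. if j = i then 1 else 0) ` I)"
proof -
  have "feature_vector I \<phi> z = (\<Sum>i\<in>I. (\<lambda>j. \<phi> i z * (if j = i then 1 else 0)))"
    using assms
    by (auto simp: feature_vector_def fun_eq_iff sum_apply if_distrib[of "times _"] cong: if_cong)
  also have "\<dots> \<in> real_fun.span ((\<lambda>i j. if j = i then 1 else 0) ` I)"
    by (intro real_fun.span_sum real_fun.span_scale real_fun.span_base) auto
  finally show ?thesis .
qed

lemma feature_vector_notin_span_if_independent_of:
  fixes F :: "('a \<Rightarrow> real) set" and \<phi> :: "'i \<Rightarrow> 'a \<Rightarrow> real"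
  assumes linear_class: "\<And>f. f \<in> F \<Longrightarrow> \<exists>c. \<forall>z\<in>C. f z = (\<Sum>i\<in>I. c i * \<phi> i z)"
    and "x \<in> C" "set ys \<subseteq> C" "independent_of F x ys"
  shows "feature_vector I \<phi> x \<notin> real_fun.span (feature_vector I \<phi> ` set ys)"
proof
  obtain f1 f2 where "f1 \<in> F" "f2 \<in> F" and agree: "\<forall>y\<in>set ys. f1 y = f2 y"
    and differ: "f1 x \<noteq> f2 x"
    using \<open>independent_of F x ys\<close> unfolding independent_of_def by blast
  obtain c1 where c1: "\<forall>z\<in>C. f1 z = (\<Sum>i\<in>I. c1 i * \<phi> i z)"
    using linear_class[OF \<open>f1 \<in> F\<close>] by blast
  obtain c2 where c2: "\<forall>z\<in>C. f2 z = (\<Sum>i\<in>I. c2 i * \<phi> i z)"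
    using linear_class[OF \<open>f2 \<in> F\<close>] by blast
  define G where "G v = (\<Sum>i\<in>I. (c1 i - c2 i) * v i)" for v :: "'i \<Rightarrow> real"
  have G_feature: "G (feature_vector I \<phi> z) = f1 z - f2 z" if "z \<in> C" for z
    using c1 c2 that
    by (simp add: G_def feature_vector_def left_diff_distrib sum_subtractf)
  assume "feature_vector I \<phi> x \<in> real_fun.span (feature_vector I \<phi> ` set ys)"
  then have "G (feature_vector I \<phi> x) = 0"
  proof (induction rule: real_fun.span_induct_alt)
    case base
    then show ?case by (simp add: G_def)
  next
    case (step c v w)
    then have "G v = 0"
      using G_feature agree \<open>set ys \<subseteq> C\<close> by auto
    then show ?case
      using step.IH unfolding G_def
      by (simp add: distrib_left sum.distrib mult.left_commute[of _ c] flip: sum_distrib_left)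
  qed
  then show False
    using G_feature[OF \<open>x \<in> C\<close>] differ by simp
qed

theorem eluder_dim_le_card_features:
  fixes F :: "('a \<Rightarrow> real) set" and \<phi> :: "'i \<Rightarrow> 'a \<Rightarrow> real"
  assumes "finite I"
    and linear_class: "\<And>f. f \<in> F \<Longrightarrow> \<exists>c. \<forall>z\<in>C. f z = (\<Sum>i\<in>I. c i * \<phi> i z)"
  shows "eluder_dim C F \<le> enat (card I)"
  unfolding eluder_dim_def
proof (rule Sup_least, clarify)
  fix xs assume xs: "set xs \<subseteq> C"
    and eluder: "\<forall>i<length xs. independent_of F (xs ! i) (take i xs)"
  let ?vs = "map (feature_vector I \<phi>) xs"
  let ?units = "(\<lambda>i j. if j = i then 1 else 0 :: real) ` I"
  have "\<forall>i<length ?vs. ?vs ! i \<notin> real_fun.span (set (take i ?vs))"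
  proof (intro allI impI)
    fix i assume i: "i < length ?vs"
    have "xs ! i \<in> C" "set (take i xs) \<subseteq> C"
      using i xs set_take_subset[of i xs] by auto
    with i eluder
    have "feature_vector I \<phi> (xs ! i) \<notin> real_fun.span (feature_vector I \<phi> ` set (take i xs))"
      by (intro feature_vector_notin_span_if_independent_of[OF linear_class]) auto
    with i show "?vs ! i \<notin> real_fun.span (set (take i ?vs))"
      by (simp add: take_map)
  qed
  from independent_if_notin_span_prefixes[OF this]
  have indep: "real_fun.independent (set ?vs)" and "distinct ?vs"
    by simp_all
  have "set ?vs \<subseteq> real_fun.span ?units"
    using feature_vector_in_span_units[OF \<open>finite I\<close>] by auto
  then have "length xs \<le> card ?units"
    using distinct_card[OF \<open>distinct ?vs\<close>]
      real_fun.independent_span_bound[OF _ indep] \<open>finite I\<close>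
    by simp
  also have "\<dots> \<le> card I"
    using \<open>finite I\<close> by (rule card_image_le)
  finally show "enat (length xs) \<le> enat (card I)"
    by simp
qed

lemma finite_cube: "finite (cube D)"
  unfolding cube_def by (simp add: finite_PiE)

lemma card_cube: "card (cube D) = 2 ^ D"
  unfolding cube_def by (simp add: card_PiE numeral_2_eq_2)

lemma sum_chi_mult_chi:
  assumes x: "x \<in> cube D" and y: "y \<in> cube D"
  shows "(\<Sum>S\<in>Pow {0..<D}. chi S x * chi S y) = (if x = y then 2 ^ D else 0)"
proof -
  have "(\<Sum>S\<in>Pow {0..<D}. chi S x * chi S y) = (\<Prod>i\<in>{0..<D}. x i * y i + 1)"
    by (subst prod_add) (simp_all add: chi_def prod.distrib)
  also have "\<dots> = (\<Prod>i\<in>{0..<D}. if x i = y i then 2 else 0)"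
  proof (intro prod.cong refl)
    fix i assume "i \<in> {0..<D}"
    then have "x i \<in> {-1, 1}" "y i \<in> {-1, 1}"
      using x y by (auto simp: cube_def PiE_iff)
    then show "x i * y i + 1 = (if x i = y i then 2 else 0)"
      by auto
  qed
  also have "\<dots> = (if \<forall>i\<in>{0..<D}. x i = y i then 2 ^ D else 0)"
    by simp
  also have "(\<forall>i\<in>{0..<D}. x i = y i) \<longleftrightarrow> x = y"
    using x y unfolding cube_def by (auto intro: PiE_ext)
  finally show ?thesis .
qed

lemma fourier_expansion:
  assumes y: "y \<in> cube D"
  shows "f y = (\<Sum>S\<in>Pow {0..<D}. fourier_coeff D f S * chi S y)"
proof -
  have "(\<Sum>S\<in>Pow {0..<D}. fourier_coeff D f S * chi S y)
      = (\<Sum>S\<in>Pow {0..<D}. \<Sum>x\<in>cube D. f x * (chi S x * chi S y) / 2 ^ D)"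
    unfolding fourier_coeff_def card_cube
    by (simp add: sum_divide_distrib sum_distrib_right mult.assoc)
  also have "\<dots> = (\<Sum>x\<in>cube D. f x / 2 ^ D * (\<Sum>S\<in>Pow {0..<D}. chi S x * chi S y))"
    by (subst sum.swap) (simp add: sum_distrib_left)
  also have "\<dots> = (\<Sum>x\<in>cube D. if x = y then f y else 0)"
    using y by (intro sum.cong) (simp_all add: sum_chi_mult_chi)
  also have "\<dots> = f y"
    using y finite_cube by simp
  finally show ?thesis ..
qed

lemma fourier_class_expansion:
  assumes "A \<subseteq> Pow {0..<D}" "f \<in> fourier_class D A" "z \<in> cube D"
  shows "f z = (\<Sum>S\<in>A. fourier_coeff D f S * chi S z)"
  using assms fourier_expansion[of z D f]
  by (simp add: fourier_class_def sum.mono_neutral_right)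

corollary eluder_dim_fourier_class_le:
  assumes "A \<subseteq> Pow {0..<D}"
  shows "eluder_dim (cube D) (fourier_class D A) \<le> enat (card A)"
proof (rule eluder_dim_le_card_features)
  show "finite A"
    using assms by (rule finite_subset) simp
  show "\<exists>c. \<forall>z\<in>cube D. f z = (\<Sum>S\<in>A. c S * chi S z)" if "f \<in> fourier_class D A" for f
    using fourier_class_expansion[OF assms that] by blast
qed

lemma card_le_sum_binomial:
  assumes "A \<subseteq> Pow {0..<D}" and "\<forall>S\<in>A. card S \<le> k"
  shows "card A \<le> (\<Sum>j\<le>k. D choose j)"
proof -
  have "card A \<le> card (\<Union>j\<le>k. {S. S \<subseteq> {0..<D} \<and> card S = j})"
    using assms by (intro card_mono) auto
  also have "\<dots> \<le> (\<Sum>j\<le>k. card {S. S \<subseteq> {0..<D} \<and> card S = j})"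
    by (rule card_UN_le) simp
  also have "\<dots> = (\<Sum>j\<le>k. D choose j)"
    by (simp add: n_subsets)
  finally show ?thesis .
qed

text \<open>With \<open>t = k/D \<le> 1\<close>, the sum times \<open>t\<^sup>k\<close> is bounded by the binomial expansion
  of \<open>(1 + t)\<^sup>D \<le> e\<^sup>t\<^sup>D = e\<^sup>k\<close>.\<close>

lemma sum_binomial_le_exp_power:
  fixes D k :: nat
  assumes "1 \<le> k" "k \<le> D"
  shows "real (\<Sum>j\<le>k. D choose j) \<le> (exp 1 * real D / real k) ^ k"
proof -
  define t where "t = real k / real D"
  have t: "0 < t" "t \<le> 1" "real D * t = real k"
    using assms unfolding t_def by auto
  have "t ^ k * real (\<Sum>j\<le>k. D choose j) = (\<Sum>j\<le>k. real (D choose j) * t ^ k)"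
    by (simp add: sum_distrib_left mult.commute)
  also have "\<dots> \<le> (\<Sum>j\<le>k. real (D choose j) * t ^ j)"
    using t by (intro sum_mono mult_left_mono power_decreasing) auto
  also have "\<dots> \<le> (\<Sum>j\<le>D. real (D choose j) * t ^ j)"
    using assms t by (intro sum_mono2) auto
  also have "\<dots> = (t + 1) ^ D"
    by (simp add: binomial_ring mult.commute)
  also have "\<dots> \<le> exp t ^ D"
    using t by (intro power_mono) (auto simp: add.commute[of t])
  also have "\<dots> = exp 1 ^ k"
    using t(3) exp_of_nat_mult[of D t] exp_of_nat_mult[of k "1::real"] by simp
  finally have "real (\<Sum>j\<le>k. D choose j) \<le> exp 1 ^ k / t ^ k"
    using t by (simp add: field_simps)
  also have "\<dots> = (exp 1 * real D / real k) ^ k"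
    unfolding t_def by (simp add: power_divide power_mult_distrib)
  finally show ?thesis .
qed

theorem proposition3:
  fixes D :: nat and A :: "nat set set"
  assumes "D \<ge> 1"
    and "A \<subseteq> Pow {0..<D}"
  shows "eluder_dim (cube D) (fourier_class D A) \<le> enat (card A) \<and>
         (\<forall>k::nat. 1 \<le> k \<and> k \<le> D \<and> (\<forall>S\<in>A. card S \<le> k) \<longrightarrow>
           card A \<le> (\<Sum>j\<le>k. D choose j) \<and>
           real (\<Sum>j\<le>k. D choose j) \<le> (exp 1 * real D / real k) ^ k)"
  using eluder_dim_fourier_class_le[OF assms(2)] card_le_sum_binomial[OF assms(2)]
    sum_binomial_le_exp_power
  by blast

end
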